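(* Let $X$ be a compact Hausdorff space with its unique compatible uniform structure $\mathfrak{U}$, and let $\sim$ be a topologically quasiconvex equivalence relation on $X$. For $A\subseteq X/\!\sim$ put $\sim_A\ =\Delta X\cup\bigcup_{[x]\in A}[x]\times[x]$. Then for every $A\subseteq X/\!\sim$, the quotient space $X/\!\sim_A$ is Hausdorff.
   Context: A subset $S$ is $u$-small (for an entourage $u$) if $S\times S\subseteq u$. An equivalence relation $\sim$ on a compact Hausdorff space $X$ is topologically quasiconvex if every equivalence class $[q]$ is closed and, for every $u\in\mathfrak{U}$, only finitely many equivalence classes are not $u$-small. *)

theory Defs
  imports "HOL-Analysis.Analysis"
begin

definition entourage :: "('a::uniform_space \<times> 'a) set \<Rightarrow> bool" where
  "entourage u \<longleftrightarrow> eventually (\<lambda>xy. xy \<in> u) uniformity"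

definition small :: "('a \<times> 'a) set \<Rightarrow> 'a set \<Rightarrow> bool" where
  "small u S \<longleftrightarrow> S \<times> S \<subseteq> u"

definition topologically_quasiconvex :: "('a::uniform_space \<times> 'a) set \<Rightarrow> bool" where
  "topologically_quasiconvex R \<longleftrightarrow>
     equiv UNIV R \<and> (\<forall>q. closed (R `` {q})) \<and>
     (\<forall>u. entourage u \<longrightarrow> finite {C \<in> UNIV // R. \<not> small u C})"

definition quotient_topology :: "'a topology \<Rightarrow> ('a \<times> 'a) set \<Rightarrow> 'a set topology" where
  "quotient_topology X R = topology (\<lambda>U. U \<subseteq> topspace X // R \<and>
      openin X {x \<in> topspace X. R `` {x} \<in> U})"

lemma istopology_quotient:
  "istopology (\<lambda>U. U \<subseteq> topspace X // R \<and> openin X {x \<in> topspace X. R `` {x} \<in> U})"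
proof -
  have 1: "openin X {x \<in> topspace X. R `` {x} \<in> S \<inter> T}"
    if "openin X {x \<in> topspace X. R `` {x} \<in> S}" "openin X {x \<in> topspace X. R `` {x} \<in> T}" for S T
  proof -
    have "{x \<in> topspace X. R `` {x} \<in> S \<inter> T} = {x \<in> topspace X. R `` {x} \<in> S} \<inter> {x \<in> topspace X. R `` {x} \<in> T}" by auto
    thus ?thesis using that by auto
  qed
  have 2: "openin X {x \<in> topspace X. R `` {x} \<in> \<Union>K}"
    if "\<forall>U\<in>K. openin X {x \<in> topspace X. R `` {x} \<in> U}" for K
  proof -
    have "{x \<in> topspace X. R `` {x} \<in> \<Union>K} = (\<Union>U\<in>K. {x \<in> topspace X. R `` {x} \<in> U})" by auto
    thus ?thesis using that by auto
  qed
  show ?thesis unfolding istopology_def using 1 2 by blast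
qed

definition sim_A :: "('a \<times> 'a) set \<Rightarrow> 'a set set \<Rightarrow> ('a \<times> 'a) set" where
  "sim_A R A = Id \<union> (\<Union>C\<in>A. C \<times> C)"

end

theory Submission
  imports Defs
begin

text \<open>Only the classes in \<open>A\<close> are kept, all other points become singletons;
  so the \<open>\<sim>\<^sub>A\<close>-saturation of a closed set \<open>K\<close> is \<open>K\<close> together with the classes in \<open>A\<close>
  meeting \<open>K\<close>. Given an entourage \<open>D\<close>, the \<open>D\<close>-small ones among these stay within the
  \<open>D\<close>-neighbourhood of \<open>K\<close>, and the remaining ones are finitely many closed sets; hence
  saturations of closed sets are closed. A compact Hausdorff space modulo an equivalence
  relation with this property has a Hausdorff quotient: two distinct classes are disjoint
  compact sets, separated by disjoint open sets, which shrink to disjoint open saturated sets.\<close>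

lemma equiv_sim_A:
  assumes "disjoint A"
  shows "equiv UNIV (sim_A R A)"
proof -
  have "(x, z) \<in> sim_A R A" if "(x, y) \<in> sim_A R A" "(y, z) \<in> sim_A R A" for x y z
    using that assms unfolding sim_A_def by (auto simp: disjoint_def)
  then have "trans (sim_A R A)"
    unfolding trans_def by blast
  moreover have "refl_on UNIV (sim_A R A)" "sym (sim_A R A)"
    by (auto simp: refl_on_def sym_def sim_A_def)
  ultimately show ?thesis
    by (simp add: equiv_def)
qed

lemma sim_A_Image: "sim_A R A `` K = K \<union> \<Union>{C \<in> A. C \<inter> K \<noteq> {}}"
  unfolding sim_A_def by auto

lemma closed_sim_A_Image:
  fixes K :: "'a::uniform_space set"
  assumes closed_A: "\<And>C. C \<in> A \<Longrightarrow> closed C"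
    and finite_not_small: "\<And>u. entourage u \<Longrightarrow> finite {C \<in> A. \<not> small u C}"
    and "closed K"
  shows "closed (sim_A R A `` K)"
  unfolding closed_def open_uniformity
proof
  fix x assume "x \<in> - (sim_A R A `` K)"
  then have x: "x \<notin> K" "\<And>C. C \<in> A \<Longrightarrow> C \<inter> K \<noteq> {} \<Longrightarrow> x \<notin> C"
    by (auto simp: sim_A_Image)
  have "eventually (\<lambda>(x', y). x' = x \<longrightarrow> y \<in> - K) uniformity"
    using \<open>closed K\<close> x(1) unfolding closed_def open_uniformity by auto
  then obtain D where D: "eventually D uniformity"
    and D_trans: "\<And>a b c. D (a, b) \<Longrightarrow> D (b, c) \<Longrightarrow> a = x \<Longrightarrow> c \<notin> K"
    by (rule uniformity_transE) (metis (lifting) ComplD case_prodD)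
  have "entourage {p. D p}"
    unfolding entourage_def using D by simp
  define B where "B = \<Union>{C \<in> A. \<not> small {p. D p} C \<and> C \<inter> K \<noteq> {}}"
  have "closed B"
    unfolding B_def using finite_not_small[OF \<open>entourage {p. D p}\<close>] closed_A
    by (intro closed_Union) (auto elim: finite_subset[rotated])
  moreover have "x \<notin> B"
    unfolding B_def using x(2) by blast
  ultimately have "eventually (\<lambda>(x', y). x' = x \<longrightarrow> y \<notin> B) uniformity"
    unfolding closed_def open_uniformity by auto
  then show "eventually (\<lambda>(x', y). x' = x \<longrightarrow> y \<in> - (sim_A R A `` K)) uniformity"
    using D
  proof eventually_elim
    case (elim p)
    obtain x' y where p: "p = (x', y)" by (cases p)
    have False if "x' = x" and y: "y \<in> sim_A R A `` K"
    proof -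
      have "D (x, y)" "y \<notin> B"
        using elim that(1) unfolding p by simp_all
      have "y \<notin> K"
        using D_trans[OF \<open>D (x, y)\<close> uniformity_refl[OF D]] by blast
      then obtain C k where "C \<in> A" "k \<in> C" "k \<in> K" "y \<in> C"
        using y by (auto simp: sim_A_Image)
      moreover from calculation have "small {p. D p} C"
        using \<open>y \<notin> B\<close> unfolding B_def by blast
      ultimately show False
        using D_trans[OF \<open>D (x, y)\<close>] by (auto simp: small_def)
    qed
    then show ?case
      using p by auto
  qed
qed

lemma openin_quotient_topology:
  "openin (quotient_topology X R) U \<longleftrightarrow>
     U \<subseteq> topspace X // R \<and> openin X {x \<in> topspace X. R `` {x} \<in> U}"
  unfolding quotient_topology_def by (simp add: istopology_quotient)

lemma topspace_quotient_topology: "topspace (quotient_topology X R) = topspace X // R"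
proof -
  have "{x \<in> topspace X. R `` {x} \<in> topspace X // R} = topspace X"
    by (auto intro: quotientI)
  then have "openin (quotient_topology X R) (topspace X // R)"
    by (simp add: openin_quotient_topology)
  then show ?thesis
    using openin_subset by (fastforce simp: openin_quotient_topology topspace_def)
qed

lemma openin_quotient_topology_image:
  assumes "equiv UNIV S" "open V" "S `` V \<subseteq> V"
  shows "openin (quotient_topology euclidean S) ((\<lambda>x. S `` {x}) ` V)"
proof -
  have "{x. S `` {x} \<in> (\<lambda>x. S `` {x}) ` V} = V"
  proof safe
    fix x y assume "y \<in> V" "S `` {x} = S `` {y}"
    then have "(y, x) \<in> S"
      using assms(1) eq_equiv_class_iff by (metis UNIV_I)
    then show "x \<in> V"
      using \<open>y \<in> V\<close> assms(3) by blast
  qed auto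
  then show ?thesis
    using assms(2) by (auto simp: openin_quotient_topology quotientI)
qed

lemma equiv_Image_compl_Image:
  assumes "equiv UNIV S"
  shows "S `` (- (S `` (- U))) \<subseteq> - (S `` (- U))"
    and "- (S `` (- U)) \<subseteq> U"
    and "S `` {x} \<subseteq> U \<Longrightarrow> x \<in> - (S `` (- U))"
proof -
  have S: "(x, x) \<in> S" "(x, y) \<in> S \<Longrightarrow> (y, x) \<in> S" "(x, y) \<in> S \<Longrightarrow> (y, z) \<in> S \<Longrightarrow> (x, z) \<in> S"
    for x y z
    using assms by (auto elim!: equivE dest: refl_onD symD transD)
  show "S `` (- (S `` (- U))) \<subseteq> - (S `` (- U))"
    using S(2,3) by blast
  show "- (S `` (- U)) \<subseteq> U"
    using S(1) by blast
  show "x \<in> - (S `` (- U))" if "S `` {x} \<subseteq> U"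
    using that S(2) by blast
qed

lemma Hausdorff_space_euclidean_t2: "Hausdorff_space (euclidean :: 'a::t2_space topology)"
  unfolding Hausdorff_space_def by (auto simp: disjnt_def separation_t2)

lemma Hausdorff_space_quotient_topology:
  fixes S :: "('a::t2_space \<times> 'a) set"
  assumes "compact (UNIV :: 'a set)" "equiv UNIV S"
    and closed_saturation: "\<And>K. closed K \<Longrightarrow> closed (S `` K)"
  shows "Hausdorff_space (quotient_topology euclidean S)"
  unfolding Hausdorff_space_def topspace_quotient_topology topspace_euclidean
proof (clarify elim!: quotientE)
  fix p q assume "S `` {p} \<noteq> S `` {q}"
  have compact_class: "compact (S `` {x})" for x
    using closed_saturation[of "{x}"] assms(1) closed_Int_compact by fastforce
  have "disjnt (S `` {p}) (S `` {q})"
    using quotient_disj[OF assms(2) quotientI quotientI, of p q] \<open>S `` {p} \<noteq> S `` {q}\<close>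
    by (simp add: disjnt_def)
  then obtain U1 U2 where U: "open U1" "open U2" "S `` {p} \<subseteq> U1" "S `` {q} \<subseteq> U2" "disjnt U1 U2"
    using Hausdorff_space_euclidean_t2[unfolded Hausdorff_space_compact_sets] compact_class
    by (metis compactin_euclidean_iff open_openin)
  define V1 where "V1 = - (S `` (- U1))"
  define V2 where "V2 = - (S `` (- U2))"
  note V = equiv_Image_compl_Image[OF assms(2), where U = U1, folded V1_def]
    equiv_Image_compl_Image[OF assms(2), where U = U2, folded V2_def]
  have "open V1" "open V2"
    using closed_saturation U(1,2) unfolding V1_def V2_def by (auto simp: closed_def)
  then have "openin (quotient_topology euclidean S) ((\<lambda>x. S `` {x}) ` V1)"
    "openin (quotient_topology euclidean S) ((\<lambda>x. S `` {x}) ` V2)"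
    using V by (simp_all add: openin_quotient_topology_image[OF assms(2)])
  moreover have "S `` {p} \<in> (\<lambda>x. S `` {x}) ` V1" "S `` {q} \<in> (\<lambda>x. S `` {x}) ` V2"
    using V U(3,4) by auto
  moreover have "disjnt ((\<lambda>x. S `` {x}) ` V1) ((\<lambda>x. S `` {x}) ` V2)"
  proof -
    have "y \<in> U1 \<inter> U2" if "x \<in> V1" "y \<in> V2" "S `` {x} = S `` {y}" for x y
    proof -
      have "y \<in> S `` V1"
        using that equiv_class_self[OF assms(2), of y] by auto
      then show ?thesis
        using V that(2) by blast
    qed
    then show ?thesis
      using U(5) by (auto simp: disjnt_def)
  qed
  ultimately show "\<exists>U V. openin (quotient_topology euclidean S) U \<and>
      openin (quotient_topology euclidean S) V \<and> S `` {p} \<in> U \<and> S `` {q} \<in> V \<and> disjnt U V"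
    by blast
qed

theorem mainTheorem8:
  fixes R :: "('a::{uniform_space, t2_space} \<times> 'a) set"
    and A :: "'a set set"
  assumes "compact (UNIV :: 'a set)"
    and "topologically_quasiconvex R"
    and "A \<subseteq> UNIV // R"
  shows "Hausdorff_space (quotient_topology euclidean (sim_A R A))"
proof (rule Hausdorff_space_quotient_topology[OF assms(1)])
  have R: "equiv UNIV R" "\<And>q. closed (R `` {q})"
    "\<And>u. entourage u \<Longrightarrow> finite {C \<in> UNIV // R. \<not> small u C}"
    using assms(2) unfolding topologically_quasiconvex_def by auto
  show "equiv UNIV (sim_A R A)"
    using quotient_disj[OF R(1)] assms(3) by (intro equiv_sim_A) (auto simp: disjoint_def)
  show "closed (sim_A R A `` K)" if "closed K" for K
  proof (rule closed_sim_A_Image[OF _ _ that])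
    show "closed C" if "C \<in> A" for C
      using that assms(3) R(2) by (auto elim!: quotientE)
    show "finite {C \<in> A. \<not> small u C}" if "entourage u" for u
      using R(3)[OF that] assms(3) by (auto elim: finite_subset[rotated])
  qed
qed

end
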